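(* For each integer $d\ge 1$, the power series expansion at $x=0$ of the rational function $$\Delta_d(x)=\frac{1}{(1-x)^{d+1}-x^{d+1}}-\frac{1}{1-2x}$$ has only nonnegative coefficients. *)

theory Defs
  imports "HOL-Computational_Algebra.Formal_Power_Series"
begin

text \<open>Both denominators have constant term 1 (for d \<ge> 1), so the fps inverses
  are the genuine power series expansions of the reciprocals.\<close>
definition Delta_fps :: "nat \<Rightarrow> real fps" where
  "Delta_fps d = inverse ((1 - fps_X) ^ (d + 1) - fps_X ^ (d + 1))
                 - inverse (1 - 2 * fps_X)"

end

theory Submission
  imports Defs
begin

text \<open>Put \<open>D = (1-x)^(d+1) - x^(d+1)\<close> and \<open>G\<^sub>r = x^r (1-x)^(d-r) / D\<close> for \<open>r \<le> d\<close>.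
  Expanding \<open>(x + (1-x))^d\<close> binomially gives \<open>1/D = \<Sum>\<^sub>r C(d,r) G\<^sub>r\<close>, and
  factoring \<open>D = (1-2x) \<Sum>\<^sub>r x^(d-r) (1-x)^r\<close> gives \<open>1/(1-2x) = \<Sum>\<^sub>r G\<^sub>r\<close>, so
  \<open>\<Delta>\<^sub>d = \<Sum>\<^sub>r (C(d,r) - 1) G\<^sub>r\<close>. Each \<open>G\<^sub>r\<close> has nonnegative coefficients because
  \<open>(1-x) G\<^sub>r = x G\<^bsub>r-1\<^esub>\<close> for \<open>r \<ge> 1\<close> and \<open>(1-x) G\<^sub>0 = 1 + x G\<^sub>d\<close>: the \<open>n\<close>-th
  coefficient of \<open>G\<^sub>r\<close> counts the walks of length \<open>n\<close> on the cycle \<open>\<int>/(d+1)\<close>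
  from \<open>0\<close> to \<open>r\<close> with steps \<open>0\<close> and \<open>+1\<close>.\<close>

unbundle fps_syntax

definition cycle_denom :: "nat \<Rightarrow> 'a::comm_ring_1 fps" where
  "cycle_denom d = (1 - fps_X) ^ (d + 1) - fps_X ^ (d + 1)"

definition cycle_fps :: "nat \<Rightarrow> nat \<Rightarrow> 'a::field fps" where
  "cycle_fps d r = fps_X ^ r * (1 - fps_X) ^ (d - r) * inverse (cycle_denom d)"

lemma cycle_denom_nth_0 [simp]: "cycle_denom d $ 0 = 1"
  by (simp add: cycle_denom_def fps_nth_power_0)

lemma cycle_denom_mult_inverse: "cycle_denom d * inverse (cycle_denom d :: 'a::field fps) = 1"
  by (simp add: inverse_mult_eq_1')

lemma cycle_denom_factor:
  "cycle_denom d = (1 - 2 * fps_X) * (\<Sum>r\<le>d. fps_X ^ r * (1 - fps_X) ^ (d - r))"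
proof -
  have "cycle_denom d = (1 - fps_X - fps_X) * (\<Sum>r<Suc d. (1 - fps_X) ^ r * fps_X ^ (d - r))"
    unfolding cycle_denom_def Suc_eq_plus1[symmetric] by (rule diff_power_eq_sum)
  also have "1 - fps_X - fps_X = (1 - 2 * fps_X :: 'a fps)"
    by (simp only: diff_diff_eq mult_2)
  also have "(\<Sum>r<Suc d. (1 - fps_X) ^ r * fps_X ^ (d - r)) =
      (\<Sum>r\<le>d. fps_X ^ r * (1 - fps_X) ^ (d - r) :: 'a fps)"
    unfolding lessThan_Suc_atMost
    by (rule sum.reindex_bij_witness[of _ "\<lambda>r. d - r" "\<lambda>r. d - r"]) (auto simp: mult.commute)
  finally show ?thesis .
qed

lemma inverse_one_minus_two_X_eq_sum_cycle_fps:
  "inverse (1 - 2 * fps_X :: 'a::field fps) = (\<Sum>r\<le>d. cycle_fps d r)"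
proof (rule fps_inverse_unique)
  have "(\<Sum>r\<le>d. cycle_fps d r) =
      (\<Sum>r\<le>d. fps_X ^ r * (1 - fps_X) ^ (d - r)) * inverse (cycle_denom d :: 'a fps)"
    by (simp add: cycle_fps_def sum_distrib_right)
  then show "(1 - 2 * fps_X) * (\<Sum>r\<le>d. cycle_fps d r) = (1 :: 'a fps)"
    using cycle_denom_mult_inverse[of d]
    by (simp only: mult.assoc[symmetric] cycle_denom_factor[symmetric])
qed

lemma inverse_cycle_denom_eq_binomial_sum:
  "inverse (cycle_denom d) = (\<Sum>r\<le>d. of_nat (d choose r) * cycle_fps d r :: 'a::field fps)"
proof -
  have "inverse (cycle_denom d) = (fps_X + (1 - fps_X)) ^ d * inverse (cycle_denom d :: 'a fps)"
    by simp
  also have "\<dots> = (\<Sum>r\<le>d. of_nat (d choose r) * fps_X ^ r * (1 - fps_X) ^ (d - r)) *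
      inverse (cycle_denom d)"
    by (simp only: binomial_ring)
  also have "\<dots> = (\<Sum>r\<le>d. of_nat (d choose r) * cycle_fps d r)"
    by (simp add: cycle_fps_def sum_distrib_right mult.assoc)
  finally show ?thesis .
qed

lemma fps_nth_Suc_one_minus_X_mult:
  "((1 - fps_X) * f) $ Suc n = f $ Suc n - (f $ n :: 'a::comm_ring_1)"
  by (simp add: algebra_simps)

lemma cycle_fps_nth_Suc:
  assumes "1 \<le> r" "r \<le> d"
  shows "cycle_fps d r $ Suc n = cycle_fps d r $ n + (cycle_fps d (r - 1) $ n :: 'a::field)"
proof -
  obtain k where r: "r = Suc k"
    using assms(1) by (cases r) auto
  have "d - k = Suc (d - r)"
    using assms(2) r by simp
  then have "(1 - fps_X) * cycle_fps d r = fps_X * (cycle_fps d (r - 1) :: 'a fps)"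
    by (simp add: cycle_fps_def r mult_ac)
  from arg_cong[OF this, of "\<lambda>f. f $ Suc n"] show ?thesis
    by (simp add: fps_nth_Suc_one_minus_X_mult diff_eq_eq add_ac)
qed

lemma cycle_fps_0_nth_Suc:
  "cycle_fps d 0 $ Suc n = cycle_fps d 0 $ n + (cycle_fps d d $ n :: 'a::field)"
proof -
  have "(1 - fps_X) * cycle_fps d 0 = (1 - fps_X) ^ (d + 1) * inverse (cycle_denom d :: 'a fps)"
    by (simp add: cycle_fps_def)
  also have "\<dots> = (cycle_denom d + fps_X ^ (d + 1)) * inverse (cycle_denom d)"
    by (simp add: cycle_denom_def)
  also have "\<dots> = 1 + fps_X ^ (d + 1) * inverse (cycle_denom d)"
    by (simp only: distrib_right cycle_denom_mult_inverse)
  also have "\<dots> = 1 + fps_X * cycle_fps d d"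
    by (simp add: cycle_fps_def mult.assoc)
  finally have "(1 - fps_X) * cycle_fps d 0 = 1 + fps_X * (cycle_fps d d :: 'a fps)" .
  from arg_cong[OF this, of "\<lambda>f. f $ Suc n"] show ?thesis
    by (simp add: fps_nth_Suc_one_minus_X_mult diff_eq_eq add_ac)
qed

lemma cycle_fps_nth_0: "cycle_fps d r $ 0 = (if r = 0 then 1 else (0 :: 'a::field))"
  by (simp add: cycle_fps_def fps_nth_power_0)

lemma cycle_fps_nth_nonneg:
  "r \<le> d \<Longrightarrow> cycle_fps d r $ n \<ge> (0 :: 'a::linordered_field)"
proof (induction n arbitrary: r)
  case 0
  then show ?case by (simp add: cycle_fps_nth_0)
next
  case (Suc n)
  show ?case
  proof (cases "r = 0")
    case True
    have "0 \<le> cycle_fps d 0 $ n + (cycle_fps d d $ n :: 'a)"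
      using Suc.IH[of 0] Suc.IH[of d] by simp
    then show ?thesis
      unfolding True cycle_fps_0_nth_Suc .
  next
    case False
    have "0 \<le> cycle_fps d r $ n + (cycle_fps d (r - 1) $ n :: 'a)"
      using Suc.prems Suc.IH[of r] Suc.IH[of "r - 1"] by simp
    then show ?thesis
      using False Suc.prems by (simp add: cycle_fps_nth_Suc)
  qed
qed

lemma Delta_fps_eq_sum_cycle_fps:
  "Delta_fps d = (\<Sum>r\<le>d. fps_const (real (d choose r) - 1) * cycle_fps d r)"
proof -
  have "Delta_fps d = (\<Sum>r\<le>d. of_nat (d choose r) * cycle_fps d r) - (\<Sum>r\<le>d. cycle_fps d r)"
    unfolding Delta_fps_def cycle_denom_def[symmetric] inverse_cycle_denom_eq_binomial_sum
      inverse_one_minus_two_X_eq_sum_cycle_fps[of d] ..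
  also have "\<dots> = (\<Sum>r\<le>d. (of_nat (d choose r) - 1) * cycle_fps d r)"
    by (simp only: left_diff_distrib mult_1 sum_subtractf)
  also have "\<dots> = (\<Sum>r\<le>d. fps_const (real (d choose r) - 1) * cycle_fps d r)"
    by (simp flip: fps_of_nat fps_const_sub)
  finally show ?thesis .
qed

theorem theorem3p3:
  fixes d :: nat
  assumes "d \<ge> 1"
  shows "\<forall>n. fps_nth (Delta_fps d) n \<ge> 0"
proof
  fix n
  have "Delta_fps d $ n = (\<Sum>r\<le>d. (real (d choose r) - 1) * cycle_fps d r $ n)"
    by (simp add: Delta_fps_eq_sum_cycle_fps fps_sum_nth)
  also have "\<dots> \<ge> 0"
  proof (intro sum_nonneg mult_nonneg_nonneg)
    fix r assume "r \<in> {..d}"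
    then show "0 \<le> real (d choose r) - 1" "0 \<le> (cycle_fps d r $ n :: real)"
      by (simp_all add: Suc_leI cycle_fps_nth_nonneg)
  qed
  finally show "Delta_fps d $ n \<ge> 0" .
qed

end
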